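(* Let $G$ be the graph with vertex set $\{a_i,b_i,c_i : i\in[4]\}\cup\{q_i^j,r_i^j : i\in[4], j\in[2]\}$ and edges: the three four-cycles $A$: $a_ia_{i\bmod 4+1}$, $B$: $b_ib_{i\bmod 4+1}$, $C$: $c_ic_{i\bmod 4+1}$ ($i\in[4]$); $q_i^j a_k, q_i^j b_k, q_i^j c_k$ for all $i,k\in[4]$, $j\in[2]$; $r_i^jq_i^j$; and $r_i^ja_i, r_i^ja_{i\bmod 4+1}, r_i^jb_i, r_i^jb_{i\bmod 4+1}, r_i^jc_i, r_i^jc_{i\bmod 4+1}$ for $i\in[4],j\in[2]$. Call $\{q_i^j,r_i^j\}$ an apex pair. In any planar geometric storyplan of $G$ there exist at least 6 frames, each containing (all vertices of) a different apex pair and all vertices of the four-cycles $A$, $B$, $C$.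
   Context: A storyplan of a graph $G$ on time steps $[\ell]$ is a pair $(A,\mathcal{D})$ where $A$ assigns to each vertex $v$ a nonempty interval $A(v)\subseteq[\ell]$ of consecutive integers ($v$ is visible at each $t\in A(v)$), adjacent vertices have intersecting intervals, and $\mathcal{D}$ assigns one fixed point to each vertex and one fixed curve to each edge. The frame at $t$ is the drawing under $\mathcal{D}$ of $G[\{v : t\in A(v)\}]$; a frame contains a vertex if the vertex is visible at $t$. The storyplan is planar geometric if every frame is a planar drawing with all edges straight-line segments. *)

theory Defs
  imports "HOL-Analysis.Analysis"
begin

text \<open>Vertices a_i, b_i, c_i (i in [4]) and q_i^j, r_i^j (i in [4], j in [2]).
  Constructor arguments outside these ranges are not vertices of G.\<close>

datatype gv = Av nat | Bv nat | Cv nat | Qv nat nat | Rv nat nat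

definition nxt :: "nat \<Rightarrow> nat" where "nxt i = i mod 4 + 1"

definition G_verts :: "gv set" where
  "G_verts = {Av i | i. i \<in> {1..4}} \<union> {Bv i | i. i \<in> {1..4}} \<union> {Cv i | i. i \<in> {1..4}}
     \<union> {Qv i j | i j. i \<in> {1..4} \<and> j \<in> {1..2}} \<union> {Rv i j | i j. i \<in> {1..4} \<and> j \<in> {1..2}}"

definition G_edges :: "gv set set" where
  "G_edges =
     {{Av i, Av (nxt i)} | i. i \<in> {1..4}}
   \<union> {{Bv i, Bv (nxt i)} | i. i \<in> {1..4}}
   \<union> {{Cv i, Cv (nxt i)} | i. i \<in> {1..4}}
   \<union> {{Qv i j, Av k} | i j k. i \<in> {1..4} \<and> j \<in> {1..2} \<and> k \<in> {1..4}}
   \<union> {{Qv i j, Bv k} | i j k. i \<in> {1..4} \<and> j \<in> {1..2} \<and> k \<in> {1..4}}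
   \<union> {{Qv i j, Cv k} | i j k. i \<in> {1..4} \<and> j \<in> {1..2} \<and> k \<in> {1..4}}
   \<union> {{Rv i j, Qv i j} | i j. i \<in> {1..4} \<and> j \<in> {1..2}}
   \<union> {{Rv i j, Av i} | i j. i \<in> {1..4} \<and> j \<in> {1..2}}
   \<union> {{Rv i j, Av (nxt i)} | i j. i \<in> {1..4} \<and> j \<in> {1..2}}
   \<union> {{Rv i j, Bv i} | i j. i \<in> {1..4} \<and> j \<in> {1..2}}
   \<union> {{Rv i j, Bv (nxt i)} | i j. i \<in> {1..4} \<and> j \<in> {1..2}}
   \<union> {{Rv i j, Cv i} | i j. i \<in> {1..4} \<and> j \<in> {1..2}}
   \<union> {{Rv i j, Cv (nxt i)} | i j. i \<in> {1..4} \<and> j \<in> {1..2}}"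

definition cycle_verts :: "gv set" where
  "cycle_verts = {Av i | i. i \<in> {1..4}} \<union> {Bv i | i. i \<in> {1..4}} \<union> {Cv i | i. i \<in> {1..4}}"

definition storyplan_intervals :: "'v set \<Rightarrow> 'v set set \<Rightarrow> nat \<Rightarrow> ('v \<Rightarrow> nat set) \<Rightarrow> bool" where
  "storyplan_intervals V E l I \<longleftrightarrow>
     (\<forall>v\<in>V. I v \<noteq> {} \<and> I v \<subseteq> {1..l} \<and> (\<exists>s t. I v = {s..t})) \<and>
     (\<forall>e\<in>E. \<forall>u v. e = {u, v} \<longrightarrow> I u \<inter> I v \<noteq> {})"

definition frame_verts :: "'v set \<Rightarrow> ('v \<Rightarrow> nat set) \<Rightarrow> nat \<Rightarrow> 'v set" where
  "frame_verts V I t = {v \<in> V. t \<in> I v}"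

definition frame_edges :: "'v set set \<Rightarrow> ('v \<Rightarrow> nat set) \<Rightarrow> nat \<Rightarrow> 'v set set" where
  "frame_edges E I t = {e \<in> E. \<forall>v\<in>e. t \<in> I v}"

definition planar_straight_line :: "'v set \<Rightarrow> 'v set set \<Rightarrow> ('v \<Rightarrow> real^2) \<Rightarrow> bool" where
  "planar_straight_line W F p \<longleftrightarrow>
     inj_on p W \<and>
     (\<forall>e\<in>F. \<forall>u v. e = {u, v} \<longrightarrow> (\<forall>w\<in>W. w \<notin> e \<longrightarrow> p w \<notin> closed_segment (p u) (p v))) \<and>
     (\<forall>e\<in>F. \<forall>f\<in>F. \<forall>u v x y. e = {u, v} \<longrightarrow> f = {x, y} \<longrightarrow> e \<noteq> f \<longrightarrow>
        closed_segment (p u) (p v) \<inter> closed_segment (p x) (p y) \<subseteq> p ` (e \<inter> f))"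

text \<open>Planar geometric storyplan (A, D) on [l]: D places each vertex at a fixed point p v
  and each edge as the straight segment between its endpoints; every frame is planar.\<close>
definition planar_geometric_storyplan ::
  "'v set \<Rightarrow> 'v set set \<Rightarrow> nat \<Rightarrow> ('v \<Rightarrow> nat set) \<Rightarrow> ('v \<Rightarrow> real^2) \<Rightarrow> bool" where
  "planar_geometric_storyplan V E l I p \<longleftrightarrow>
     storyplan_intervals V E l I \<and>
     (\<forall>t\<in>{1..l}. planar_straight_line (frame_verts V I t) (frame_edges E I t) p)"

end

(* A frame showing three apices q together with three vertices of the cycle A contains K_{3,3}, and
   so does a frame showing two apices q, q' together with all of A and b_1: take the parts
   {q, a_1, a_3} and {q', a_2, a_4} and route the edge q q' through b_1. By the Jordan curve theorem
   neither frame has a planar straight-line drawing.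
   If two cycle vertices had disjoint intervals, every apex interval would contain the gap between
   them, so the apex intervals would pairwise meet. As a 4-cycle is not an interval graph, some
   chord a_1 a_3 or a_2 a_4 has meeting intervals as well, and Helly's theorem for intervals then
   yields a frame of the first kind. Hence the cycle intervals share a window [L, R], which every apex
   interval meets. By the second kind of frame, no two apices are visible at the same time of the
   window, so at most two of the eight apex intervals stick out of it. Each of the remaining six
   contains a time at which its partner r is visible too, and these times are pairwise distinct. *)

theory Submission
  imports Defs "HOL-Complex_Analysis.Winding_Numbers"
begin

section \<open>Intervals of a linear order\<close>

lemma Icc_Int_Icc_nonempty_iff:
  fixes a b c d :: "'a::linorder"
  shows "{a..b} \<inter> {c..d} \<noteq> {} \<longleftrightarrow> a \<le> b \<and> c \<le> d \<and> a \<le> d \<and> c \<le> b"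
  by (auto simp: Int_atLeastAtMost max_def min_def)

lemma interval_Helly:
  fixes J :: "'i \<Rightarrow> 'a::linorder set"
  assumes "finite X" "X \<noteq> {}"
    and intervals: "\<And>x. x \<in> X \<Longrightarrow> \<exists>a b. J x = {a..b}"
    and meet: "\<And>x y. x \<in> X \<Longrightarrow> y \<in> X \<Longrightarrow> J x \<inter> J y \<noteq> {}"
  shows "\<exists>L R. L \<le> R \<and> (\<Inter>x\<in>X. J x) = {L..R}"
proof -
  have "\<forall>x\<in>X. \<exists>ab. J x = {fst ab..snd ab}"
    using intervals by fastforce
  then obtain ab where "\<forall>x\<in>X. J x = {fst (ab x)..snd (ab x)}"
    by (rule bchoice[THEN exE])
  then obtain a b where ab: "\<And>x. x \<in> X \<Longrightarrow> J x = {a x..b x}"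
    by (intro that[of "\<lambda>x. fst (ab x)" "\<lambda>x. snd (ab x)"]) blast
  define L where "L = Max (a ` X)"
  define R where "R = Min (b ` X)"
  obtain x y where "x \<in> X" "L = a x" "y \<in> X" "R = b y"
    using Max_in[of "a ` X"] Min_in[of "b ` X"] assms(1,2) unfolding L_def R_def by blast
  then have "L \<le> R"
    using meet[of x y] ab by (simp add: Icc_Int_Icc_nonempty_iff)
  moreover have "(\<Inter>x\<in>X. J x) = {L..R}"
  proof (rule set_eqI)
    fix \<tau>
    have "\<tau> \<in> (\<Inter>x\<in>X. J x) \<longleftrightarrow> (\<forall>x\<in>X. a x \<le> \<tau>) \<and> (\<forall>x\<in>X. \<tau> \<le> b x)"
      using ab by auto
    also have "\<dots> \<longleftrightarrow> \<tau> \<in> {L..R}"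
      unfolding L_def R_def using assms(1,2)
      by (simp only: atLeastAtMost_iff Max_le_iff Min_ge_iff finite_imageI image_is_empty simp_thms)
        blast
    finally show "\<tau> \<in> (\<Inter>x\<in>X. J x) \<longleftrightarrow> \<tau> \<in> {L..R}" .
  qed
  ultimately show ?thesis
    by (intro exI conjI)
qed

lemma interval_contains_gap:
  fixes a b c d e f :: "'a::linorder"
  assumes "{a..b} \<inter> {c..d} \<noteq> {}" "{a..b} \<inter> {e..f} \<noteq> {}" "d \<le> e"
  shows "d \<in> {a..b}"
  using assms unfolding Icc_Int_Icc_nonempty_iff by (simp add: order.trans[of d e b])

lemma intervals_meeting_disjoint_pair_meet:
  fixes J1 J2 U V :: "'a::linorder set"
  assumes J1: "\<exists>a b. J1 = {a..b}" and J2: "\<exists>a b. J2 = {a..b}"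
    and U: "\<exists>a b. U = {a..b}" and V: "\<exists>a b. V = {a..b}"
    and "U \<inter> V = {}"
    and "J1 \<inter> U \<noteq> {}" "J1 \<inter> V \<noteq> {}" "J2 \<inter> U \<noteq> {}" "J2 \<inter> V \<noteq> {}"
  shows "J1 \<inter> J2 \<noteq> {}"
proof -
  obtain c d e f where UV: "U = {c..d}" "V = {e..f}"
    using U V by blast
  have "c \<le> d" "e \<le> f"
    using assms(6,7) UV by auto
  with assms(5) have "d \<le> e \<or> f \<le> c"
    unfolding UV Icc_Int_Icc_nonempty_iff[symmetric] by auto
  then have "(d \<in> J1 \<and> d \<in> J2) \<or> (f \<in> J1 \<and> f \<in> J2)"
    using J1 J2 assms(6-9) interval_contains_gap[of _ _ c d e f] interval_contains_gap[of _ _ e f c d]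
    unfolding UV by metis
  then show ?thesis
    by blast
qed

lemma interval_meeting_window_cases:
  fixes a b L R :: "'a::linorder"
  assumes "{a..b} \<inter> {L..R} \<noteq> {}"
  shows "{a..b} \<subseteq> {L..R} \<or> L \<in> {a..b} \<or> R \<in> {a..b}"
  using assms unfolding Icc_Int_Icc_nonempty_iff by (auto simp: not_le)

lemma card_intervals_within_window:
  fixes J :: "'i \<Rightarrow> 'a::linorder set"
  assumes "finite X"
    and intervals: "\<And>x. x \<in> X \<Longrightarrow> \<exists>a b. J x = {a..b}"
    and meet: "\<And>x. x \<in> X \<Longrightarrow> J x \<inter> {L..R} \<noteq> {}"
    and disjoint: "\<And>x y \<tau>. x \<in> X \<Longrightarrow> y \<in> X \<Longrightarrow> \<tau> \<in> {L..R} \<Longrightarrow> \<tau> \<in> J x \<Longrightarrow> \<tau> \<in> J y \<Longrightarrow> x = y"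
  shows "card X \<le> card {x \<in> X. J x \<subseteq> {L..R}} + 2"
proof (cases "L \<le> R")
  case True
  define XL where "XL = {x \<in> X. L \<in> J x}"
  define XR where "XR = {x \<in> X. R \<in> J x}"
  have "X \<subseteq> {x \<in> X. J x \<subseteq> {L..R}} \<union> XL \<union> XR"
  proof
    fix x assume "x \<in> X"
    then obtain a b where "J x = {a..b}" "{a..b} \<inter> {L..R} \<noteq> {}"
      using intervals meet by metis
    then show "x \<in> {x \<in> X. J x \<subseteq> {L..R}} \<union> XL \<union> XR"
      using \<open>x \<in> X\<close> interval_meeting_window_cases unfolding XL_def XR_def by blast
  qed
  then have "card X \<le> card ({x \<in> X. J x \<subseteq> {L..R}} \<union> XL \<union> XR)"
    using assms(1) by (intro card_mono) (auto simp: XL_def XR_def)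
  also have "\<dots> \<le> card {x \<in> X. J x \<subseteq> {L..R}} + card XL + card XR"
    by (meson card_Un_le add_right_mono order_trans)
  finally have "card X \<le> card {x \<in> X. J x \<subseteq> {L..R}} + card XL + card XR" .
  moreover have "card XL \<le> 1" "card XR \<le> 1"
    using True disjoint assms(1) unfolding XL_def XR_def
    by (auto simp: card_le_Suc0_iff_eq)
  ultimately show ?thesis
    by linarith
next
  case False
  then show ?thesis
    using meet by (cases "X = {}") auto
qed

lemma distinct_witnesses:
  assumes meet: "\<And>x. x \<in> X \<Longrightarrow> J x \<inter> K x \<noteq> {}"
    and disjoint: "\<And>x y \<tau>. x \<in> X \<Longrightarrow> y \<in> X \<Longrightarrow> \<tau> \<in> J x \<Longrightarrow> \<tau> \<in> J y \<Longrightarrow> x = y"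
  shows "\<exists>T f. bij_betw f T X \<and> (\<forall>\<tau>\<in>T. \<tau> \<in> J (f \<tau>) \<inter> K (f \<tau>))"
proof -
  have "\<forall>x\<in>X. \<exists>\<tau>. \<tau> \<in> J x \<inter> K x"
    using meet by blast
  then obtain w where w: "\<forall>x\<in>X. w x \<in> J x \<inter> K x"
    by (rule bchoice[THEN exE])
  have "inj_on w X"
  proof (rule inj_onI)
    fix x y assume "x \<in> X" "y \<in> X" "w x = w y"
    then show "x = y"
      using w disjoint[of x y "w x"] by (metis IntD1)
  qed
  then have "bij_betw (the_inv_into X w) (w ` X) X"
    by (rule bij_betw_the_inv_into[OF inj_on_imp_bij_betw])
  moreover have "\<forall>\<tau>\<in>w ` X. \<tau> \<in> J (the_inv_into X w \<tau>) \<inter> K (the_inv_into X w \<tau>)"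
    using w the_inv_into_f_f[OF \<open>inj_on w X\<close>] by auto
  ultimately show ?thesis
    by blast
qed

section \<open>Arcs and theta graphs in the plane\<close>

definition endless_image :: "(real \<Rightarrow> 'a::topological_space) \<Rightarrow> 'a set" where
  "endless_image g = path_image g - {pathstart g, pathfinish g}"

lemma endless_image_nonempty: "arc g \<Longrightarrow> endless_image g \<noteq> {}"
  unfolding endless_image_def by (rule nonempty_simple_path_endless[OF arc_imp_simple_path])

lemma connected_endless_image: "arc g \<Longrightarrow> connected (endless_image g)"
  by (simp add: endless_image_def connected_simple_path_endless arc_imp_simple_path)

lemma path_image_subset_closure_endless_image:
  fixes g :: "real \<Rightarrow> 'a::real_normed_vector"
  assumes "arc g"
  shows "path_image g \<subseteq> closure (endless_image g)"
proof -
  have "continuous_on {0..1} g"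
    using arc_imp_path[OF assms] by (simp add: path_def)
  then have "g ` closure {0<..<1} \<subseteq> closure (g ` {0<..<1})"
    by (intro image_closure_subset) (auto intro: continuous_on_subset closure_subset[THEN subsetD])
  moreover have "endless_image g = g ` {0<..<1}"
    unfolding endless_image_def by (rule simple_path_endless[OF arc_imp_simple_path[OF assms]])
  ultimately show ?thesis
    by (simp add: path_image_def)
qed

lemma connected_subset_inside_or_outside:
  fixes K :: "'a::real_normed_vector set"
  assumes "connected S" "S \<inter> K = {}" "closed K"
  shows "S \<subseteq> inside K \<or> S \<subseteq> outside K"
proof -
  have "inside K \<inter> S = {} \<or> outside K \<inter> S = {}"
    using assms
    by (intro connectedD[OF assms(1) open_inside[OF assms(3)] open_outside[OF assms(3)]])
      (auto simp: inside_outside)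
  then show ?thesis
    using assms(2) inside_Un_outside[of K] by blast
qed

definition parallel_arcs :: "(real \<Rightarrow> 'a::topological_space) \<Rightarrow> (real \<Rightarrow> 'a) \<Rightarrow> bool" where
  "parallel_arcs c1 c2 \<longleftrightarrow> arc c1 \<and> arc c2 \<and>
     pathstart c1 = pathstart c2 \<and> pathfinish c1 = pathfinish c2 \<and>
     path_image c1 \<inter> path_image c2 = {pathstart c1, pathfinish c1}"

lemma parallel_arcs_sym: "parallel_arcs c1 c2 \<Longrightarrow> parallel_arcs c2 c1"
  unfolding parallel_arcs_def by (metis Int_commute)

lemma parallel_arcs_endless_image_disjoint:
  "parallel_arcs c1 c2 \<Longrightarrow> endless_image c1 \<inter> path_image c2 = {}"
  unfolding parallel_arcs_def endless_image_def by blast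

lemma parallel_arcs_loop:
  fixes c1 c2 :: "real \<Rightarrow> complex"
  assumes "parallel_arcs c1 c2"
  shows "simple_path (c1 +++ reversepath c2)"
    and "pathfinish (c1 +++ reversepath c2) = pathstart (c1 +++ reversepath c2)"
    and "path_image (c1 +++ reversepath c2) = path_image c1 \<union> path_image c2"
  using assms
  by (auto simp: parallel_arcs_def path_image_join arc_reversepath intro!: simple_path_join_loop)

lemma parallel_arcs_Jordan:
  fixes c1 c2 :: "real \<Rightarrow> complex"
  assumes "parallel_arcs c1 c2"
  defines "K \<equiv> path_image c1 \<union> path_image c2"
  shows "closed K" "open (inside K)" "connected (inside K)"
    and "K \<subseteq> closure (inside K)" "closure (inside K) \<subseteq> K \<union> inside K"
proof -
  note L = parallel_arcs_loop[OF assms(1)]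
  note J = Jordan_inside_outside[OF L(1,2), unfolded L(3), folded K_def]
  show "closed K"
    using assms(1) by (auto simp: K_def parallel_arcs_def intro: closed_path_image arc_imp_path)
  then show "closure (inside K) \<subseteq> K \<union> inside K"
    using closure_inside_subset by blast
  show "open (inside K)" "connected (inside K)" "K \<subseteq> closure (inside K)"
    using J frontier_def by auto
qed

lemma parallel_arcs_winding_number:
  fixes c1 c2 :: "real \<Rightarrow> complex"
  assumes "parallel_arcs c1 c2" "z \<notin> path_image c1" "z \<notin> path_image c2"
  shows "winding_number c1 z - winding_number c2 z \<in> {-1, 0, 1}"
    and "winding_number c1 z - winding_number c2 z \<noteq> 0 \<longleftrightarrow> z \<in> inside (path_image c1 \<union> path_image c2)"
proof -
  note L = parallel_arcs_loop[OF assms(1)]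
  have "winding_number (c1 +++ reversepath c2) z = winding_number c1 z - winding_number c2 z"
    using assms
    by (simp add: parallel_arcs_def arc_imp_path winding_number_join winding_number_reversepath)
  moreover have "z \<notin> path_image (c1 +++ reversepath c2)"
    using assms L(3) by blast
  ultimately show "winding_number c1 z - winding_number c2 z \<in> {-1, 0, 1}"
    and "winding_number c1 z - winding_number c2 z \<noteq> 0 \<longleftrightarrow> z \<in> inside (path_image c1 \<union> path_image c2)"
    using simple_closed_path_winding_number_cases[OF L(1,2)]
      simple_closed_path_winding_number_inside[OF L(1)]
      winding_number_zero_in_outside[OF simple_path_imp_path[OF L(1)] L(2)]
      inside_Un_outside[of "path_image c1 \<union> path_image c2"] L(3)
    by (metis ComplI UnE neg_equal_0_iff_equal one_neq_zero)+
qed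

lemma unit_differences_exclusive:
  fixes a b :: complex
  assumes "a \<in> {-1, 0, 1}" "b \<in> {-1, 0, 1}" "a - b \<in> {-1, 1}"
  shows "a \<noteq> 0 \<longleftrightarrow> b = 0"
  using assms by auto

lemma theta_inside_exclusive:
  fixes c1 c2 c3 :: "real \<Rightarrow> complex"
  assumes p12: "parallel_arcs c1 c2" and p13: "parallel_arcs c1 c3" and p23: "parallel_arcs c2 c3"
    and z: "z \<in> inside (path_image c1 \<union> path_image c2)" "z \<notin> path_image c3"
  shows "z \<in> inside (path_image c1 \<union> path_image c3) \<longleftrightarrow> z \<notin> inside (path_image c2 \<union> path_image c3)"
proof -
  have z12: "z \<notin> path_image c1" "z \<notin> path_image c2"
    using z(1) inside_no_overlap by blast+
  note W12 = parallel_arcs_winding_number[OF p12 z12]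
  note W13 = parallel_arcs_winding_number[OF p13 z12(1) z(2)]
  note W23 = parallel_arcs_winding_number[OF p23 z12(2) z(2)]
  \<comment> \<open>\<open>w1 - w2 = (w1 - w3) - (w2 - w3)\<close> is a unit, so exactly one of the two differences vanishes\<close>
  have "winding_number c1 z - winding_number c2 z \<in> {-1, 1}"
    using W12 z(1) by auto
  then show ?thesis
    unfolding W13(2)[symmetric] W23(2)[symmetric]
    using unit_differences_exclusive[OF W13(1) W23(1)] by simp
qed

lemma theta_one_arc_inside:
  fixes c1 c2 c3 :: "real \<Rightarrow> complex"
  assumes p12: "parallel_arcs c1 c2" and p13: "parallel_arcs c1 c3" and p23: "parallel_arcs c2 c3"
  defines "P1 \<equiv> path_image c1" and "P2 \<equiv> path_image c2" and "P3 \<equiv> path_image c3"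
  shows "endless_image c3 \<subseteq> inside (P1 \<union> P2) \<or> endless_image c2 \<subseteq> inside (P1 \<union> P3) \<or>
    endless_image c1 \<subseteq> inside (P2 \<union> P3)"
proof (rule ccontr)
  assume neg: "\<not> ?thesis"
  note J12 = parallel_arcs_Jordan[OF p12, folded P1_def P2_def]
  note J13 = parallel_arcs_Jordan[OF p13, folded P1_def P3_def]
  note J23 = parallel_arcs_Jordan[OF p23, folded P2_def P3_def]
  have d1: "endless_image c1 \<inter> (P2 \<union> P3) = {}"
    using parallel_arcs_endless_image_disjoint[OF p12] parallel_arcs_endless_image_disjoint[OF p13]
    by (auto simp: P2_def P3_def)
  have d2: "endless_image c2 \<inter> (P1 \<union> P3) = {}"
    using parallel_arcs_endless_image_disjoint[OF parallel_arcs_sym[OF p12]]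
      parallel_arcs_endless_image_disjoint[OF p23] by (auto simp: P1_def P3_def)
  have d3: "endless_image c3 \<inter> (P1 \<union> P2) = {}"
    using parallel_arcs_endless_image_disjoint[OF parallel_arcs_sym[OF p13]]
      parallel_arcs_endless_image_disjoint[OF parallel_arcs_sym[OF p23]] by (auto simp: P1_def P2_def)
  have "endless_image c3 \<subseteq> inside (P1 \<union> P2) \<or> endless_image c3 \<subseteq> outside (P1 \<union> P2)"
    using p13 d3 J12(1)
    by (intro connected_subset_inside_or_outside connected_endless_image) (auto simp: parallel_arcs_def)
  with neg have out3: "endless_image c3 \<subseteq> outside (P1 \<union> P2)"
    by blast
  have not3: "z \<notin> P3" if z: "z \<in> inside (P1 \<union> P2)" for z
  proof
    assume "z \<in> P3"
    moreover have "pathstart c3 \<in> P1" "pathfinish c3 \<in> P1"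
      using p13 pathstart_in_path_image[of c1] pathfinish_in_path_image[of c1]
      by (simp_all add: parallel_arcs_def P1_def)
    moreover have "z \<notin> P1"
      using z inside_no_overlap by blast
    ultimately have "z \<in> endless_image c3"
      by (auto simp: endless_image_def P3_def)
    then show False
      using out3 z inside_Int_outside by blast
  qed
  have "z \<in> inside (P1 \<union> P3) \<longleftrightarrow> z \<notin> inside (P2 \<union> P3)" if "z \<in> inside (P1 \<union> P2)" for z
    using theta_inside_exclusive[OF p12 p13 p23 that[unfolded P1_def P2_def]
        not3[OF that, unfolded P3_def]]
    unfolding P1_def P2_def P3_def .
  then have "inside (P1 \<union> P2) \<subseteq> inside (P1 \<union> P3) \<or> inside (P1 \<union> P2) \<subseteq> inside (P2 \<union> P3)"
    using connectedD[OF J12(3) J13(2) J23(2)] by blast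
  then show False
  proof
    assume "inside (P1 \<union> P2) \<subseteq> inside (P1 \<union> P3)"
    then have "P2 \<subseteq> P1 \<union> P3 \<union> inside (P1 \<union> P3)"
      using J12(4) J13(5) closure_mono by blast
    then show False
      using neg d2 by (auto simp: endless_image_def P2_def)
  next
    assume "inside (P1 \<union> P2) \<subseteq> inside (P2 \<union> P3)"
    then have "P1 \<subseteq> P2 \<union> P3 \<union> inside (P2 \<union> P3)"
      using J12(4) J23(5) closure_mono by blast
    then show False
      using neg d1 by (auto simp: endless_image_def P1_def)
  qed
qed

lemma theta_split_inside:
  fixes c1 c2 c :: "real \<Rightarrow> complex"
  assumes p12: "parallel_arcs c1 c2" and p1: "parallel_arcs c1 c" and p2: "parallel_arcs c2 c"
    and inside: "endless_image c \<subseteq> inside (path_image c1 \<union> path_image c2)"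
  shows "inside (path_image c1 \<union> path_image c) \<inter> inside (path_image c2 \<union> path_image c) = {}"
    and "inside (path_image c1 \<union> path_image c) \<union> inside (path_image c2 \<union> path_image c) \<union>
      endless_image c = inside (path_image c1 \<union> path_image c2)"
proof -
  have ne: "path_image c \<inter> inside (path_image c1 \<union> path_image c2) \<noteq> {}"
    using inside endless_image_nonempty[of c] p1 by (auto simp: parallel_arcs_def endless_image_def)
  have ab: "pathstart c \<noteq> pathfinish c"
    using p1 arc_distinct_ends[of c] by (auto simp: parallel_arcs_def)
  obtain
    "inside (path_image c1 \<union> path_image c) \<inter> inside (path_image c2 \<union> path_image c) = {}"
    "inside (path_image c1 \<union> path_image c) \<union> inside (path_image c2 \<union> path_image c) \<union>
      (path_image c - {pathstart c, pathfinish c}) = inside (path_image c1 \<union> path_image c2)"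
    by (rule split_inside_simple_closed_curve[of c1 "pathstart c" "pathfinish c" c2 c])
      (use ne ab p12 p1 p2 in \<open>auto simp: parallel_arcs_def arc_imp_simple_path\<close>)
  then show "inside (path_image c1 \<union> path_image c) \<inter> inside (path_image c2 \<union> path_image c) = {}"
    and "inside (path_image c1 \<union> path_image c) \<union> inside (path_image c2 \<union> path_image c) \<union>
      endless_image c = inside (path_image c1 \<union> path_image c2)"
    by (simp_all add: endless_image_def)
qed

lemma theta_closure_inside_disjoint:
  fixes x y z :: "real \<Rightarrow> complex"
  assumes pxy: "parallel_arcs x y" and pxz: "parallel_arcs x z" and pyz: "parallel_arcs y z"
    and inside: "endless_image z \<subseteq> inside (path_image x \<union> path_image y)"
  shows "closure (inside (path_image y \<union> path_image z)) \<inter> endless_image x = {}"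
proof -
  have "inside (path_image y \<union> path_image z) \<subseteq> inside (path_image x \<union> path_image y)"
    using theta_split_inside(2)[OF assms] by blast
  then have "inside (path_image y \<union> path_image z) \<inter> path_image x = {}"
    using inside_no_overlap by blast
  then show ?thesis
    using parallel_arcs_Jordan(5)[OF pyz] parallel_arcs_endless_image_disjoint[OF pxy]
      parallel_arcs_endless_image_disjoint[OF pxz] by (auto simp: endless_image_def)
qed

lemma connected_subset_inside_if_meets:
  fixes K :: "'a::real_normed_vector set"
  assumes "connected F" "F \<inter> K = {}" "closed K" "closure F \<inter> inside K \<noteq> {}"
  shows "F \<subseteq> inside K"
proof -
  have "F \<inter> inside K \<noteq> {}"
    using assms(4) open_Int_closure_eq_empty[OF open_inside[OF assms(3)]] by (auto simp: Int_commute)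
  then show ?thesis
    using connected_subset_inside_or_outside[OF assms(1-3)] inside_Int_outside by blast
qed

lemma theta_chord_outside_impossible:
  fixes h1 h2 e :: "real \<Rightarrow> complex"
  assumes p12: "parallel_arcs h1 h2" and p1e: "parallel_arcs h1 e" and p2e: "parallel_arcs h2 e"
    and inside1: "endless_image h1 \<subseteq> inside (path_image h2 \<union> path_image e)"
    and F: "connected F" "F \<inter> (path_image h1 \<union> path_image h2 \<union> path_image e) = {}"
      "F \<subseteq> outside (path_image h1 \<union> path_image h2)"
    and u: "u \<in> closure F \<inter> endless_image h1" and v: "v \<in> closure F \<inter> endless_image h2"
  shows False
proof -
  let ?P1 = "path_image h1" and ?P2 = "path_image h2" and ?Pe = "path_image e"
  note p21 = parallel_arcs_sym[OF p12] and pe1 = parallel_arcs_sym[OF p1e]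
  have "closure F \<inter> inside (?P2 \<union> ?Pe) \<noteq> {}"
    using u inside1 by blast
  moreover have "F \<inter> (?P2 \<union> ?Pe) = {}"
    using F(2) by blast
  ultimately have "F \<subseteq> inside (?P2 \<union> ?Pe)"
    using connected_subset_inside_if_meets[OF F(1) _ parallel_arcs_Jordan(1)[OF p2e]] by blast
  moreover have "F \<inter> inside (?P2 \<union> ?P1) = {}"
    using F(3) inside_Int_outside[of "?P1 \<union> ?P2"] by (simp only: sup_commute[of ?P2 ?P1]) blast
  moreover have "F \<inter> endless_image h1 = {}"
    using F(2) by (auto simp: endless_image_def)
  moreover note theta_split_inside(2)[OF p2e p21 pe1 inside1]
  ultimately have "F \<subseteq> inside (?Pe \<union> ?P1)"
    by blast
  then have "v \<in> closure (inside (?Pe \<union> ?P1))"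
    using v closure_mono by blast
  then show False
    using theta_closure_inside_disjoint[OF p2e p21 pe1 inside1] v by blast
qed

lemma theta_chord_inside_impossible:
  fixes h1 h2 e :: "real \<Rightarrow> complex"
  assumes p12: "parallel_arcs h1 h2" and p1e: "parallel_arcs h1 e" and p2e: "parallel_arcs h2 e"
    and e_in: "endless_image e \<subseteq> inside (path_image h1 \<union> path_image h2)"
    and F: "connected F" "F \<inter> (path_image h1 \<union> path_image h2 \<union> path_image e) = {}"
      "F \<subseteq> inside (path_image h1 \<union> path_image h2)"
    and u: "u \<in> closure F \<inter> endless_image h1" and v: "v \<in> closure F \<inter> endless_image h2"
  shows False
proof -
  let ?P1 = "path_image h1" and ?P2 = "path_image h2" and ?Pe = "path_image e"
  note split = theta_split_inside[OF p12 p1e p2e e_in]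
  have "endless_image e \<subseteq> ?Pe"
    by (auto simp: endless_image_def)
  then have "F \<subseteq> inside (?P1 \<union> ?Pe) \<union> inside (?P2 \<union> ?Pe)"
    using F(2,3) split(2) by blast
  then have "F \<subseteq> inside (?P1 \<union> ?Pe) \<or> F \<subseteq> inside (?P2 \<union> ?Pe)"
    using connectedD[OF F(1) parallel_arcs_Jordan(2)[OF p1e] parallel_arcs_Jordan(2)[OF p2e]] split(1)
    by blast
  then show False
  proof
    assume "F \<subseteq> inside (?P1 \<union> ?Pe)"
    moreover have "endless_image e \<subseteq> inside (?P2 \<union> ?P1)"
      using e_in by (simp add: Un_commute)
    ultimately show False
      using theta_closure_inside_disjoint[OF parallel_arcs_sym[OF p12] p2e p1e] closure_mono[of F] v
      by blast
  next
    assume "F \<subseteq> inside (?P2 \<union> ?Pe)"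
    then show False
      using theta_closure_inside_disjoint[OF p12 p1e p2e e_in] closure_mono[of F] u by blast
  qed
qed

lemma theta_chord_separated:
  fixes h1 h2 e :: "real \<Rightarrow> complex"
  assumes p12: "parallel_arcs h1 h2" and p1e: "parallel_arcs h1 e" and p2e: "parallel_arcs h2 e"
    and F: "connected F" "F \<inter> (path_image h1 \<union> path_image h2 \<union> path_image e) = {}"
    and u: "u \<in> closure F \<inter> endless_image h1" and v: "v \<in> closure F \<inter> endless_image h2"
    and S: "S \<in> {inside (path_image h1 \<union> path_image h2), outside (path_image h1 \<union> path_image h2)}"
      "endless_image e \<subseteq> S" "F \<subseteq> S"
  shows False
proof -
  let ?P1 = "path_image h1" and ?P2 = "path_image h2" and ?Pe = "path_image e"
  show False
  proof (cases "S = inside (?P1 \<union> ?P2)")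
    case True
    with S show False
      using theta_chord_inside_impossible[OF p12 p1e p2e _ F _ u v] by blast
  next
    case False
    with S have e_out: "endless_image e \<subseteq> outside (?P1 \<union> ?P2)" and F_out: "F \<subseteq> outside (?P1 \<union> ?P2)"
      by auto
    consider "endless_image e \<subseteq> inside (?P1 \<union> ?P2)" | "endless_image h2 \<subseteq> inside (?P1 \<union> ?Pe)"
      | "endless_image h1 \<subseteq> inside (?P2 \<union> ?Pe)"
      using theta_one_arc_inside[OF p12 p1e p2e] by blast
    then show False
    proof cases
      case 1
      moreover have "endless_image e \<noteq> {}"
        using p1e endless_image_nonempty[of e] by (simp add: parallel_arcs_def)
      ultimately show False
        using e_out inside_Int_outside[of "?P1 \<union> ?P2"] by blast
    next
      case 2
      moreover have "F \<inter> (?P2 \<union> ?P1 \<union> ?Pe) = {}" "F \<subseteq> outside (?P2 \<union> ?P1)"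
        using F(2) F_out by (auto simp: Un_commute)
      ultimately show False
        using theta_chord_outside_impossible[OF parallel_arcs_sym[OF p12] p2e p1e _ F(1) _ _ v u]
        by blast
    next
      case 3
      with F F_out show False
        using theta_chord_outside_impossible[OF p12 p1e p2e _ F(1) _ _ u v] by blast
    qed
  qed
qed

section \<open>Non-planarity of \<open>K\<^sub>3\<^sub>,\<^sub>3\<close>\<close>

definition K33_arcs ::
    "(nat \<Rightarrow> 'a) \<Rightarrow> (nat \<Rightarrow> 'a) \<Rightarrow> (nat \<Rightarrow> nat \<Rightarrow> real \<Rightarrow> 'a::topological_space) \<Rightarrow> bool"
  where "K33_arcs x y g \<longleftrightarrow> inj_on x {..<3} \<and> inj_on y {..<3} \<and>
    (\<forall>i<3. \<forall>j<3. arc (g i j) \<and> pathstart (g i j) = x i \<and> pathfinish (g i j) = y j) \<and>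
    (\<forall>i<3. \<forall>j<3. \<forall>k<3. \<forall>l<3. (i, j) \<noteq> (k, l) \<longrightarrow>
       path_image (g i j) \<inter> path_image (g k l) \<subseteq> {x i, y j} \<inter> {x k, y l})"

lemma K33_arcsI:
  assumes "inj_on x {..<3}" "inj_on y {..<3}"
    and "\<And>i j. i < 3 \<Longrightarrow> j < 3 \<Longrightarrow> arc (g i j) \<and> pathstart (g i j) = x i \<and> pathfinish (g i j) = y j"
    and "\<And>i j k l. i < 3 \<Longrightarrow> j < 3 \<Longrightarrow> k < 3 \<Longrightarrow> l < 3 \<Longrightarrow> (i, j) \<noteq> (k, l) \<Longrightarrow>
      path_image (g i j) \<inter> path_image (g k l) \<subseteq> {x i, y j} \<inter> {x k, y l}"
  shows "K33_arcs x y g"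
  using assms unfolding K33_arcs_def by blast

lemma K33_arcsD:
  assumes "K33_arcs x y g"
  shows "inj_on x {..<3}" "inj_on y {..<3}"
    and "\<And>i j. i < 3 \<Longrightarrow> j < 3 \<Longrightarrow> arc (g i j) \<and> pathstart (g i j) = x i \<and> pathfinish (g i j) = y j"
    and "\<And>i j k l. i < 3 \<Longrightarrow> j < 3 \<Longrightarrow> k < 3 \<Longrightarrow> l < 3 \<Longrightarrow> (i, j) \<noteq> (k, l) \<Longrightarrow>
      path_image (g i j) \<inter> path_image (g k l) \<subseteq> {x i, y j} \<inter> {x k, y l}"
  using assms unfolding K33_arcs_def by blast+

lemma K33_arcs_permute:
  assumes K: "K33_arcs x y g" and \<sigma>: "bij_betw \<sigma> {..<3} {..<3}" and \<tau>: "bij_betw \<tau> {..<3} {..<3}"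
  shows "K33_arcs (x \<circ> \<sigma>) (y \<circ> \<tau>) (\<lambda>i j. g (\<sigma> i) (\<tau> j))"
proof (rule K33_arcsI)
  show "inj_on (x \<circ> \<sigma>) {..<3}" "inj_on (y \<circ> \<tau>) {..<3}"
    using K33_arcsD(1,2)[OF K] \<sigma> \<tau> by (auto simp: bij_betw_def intro: comp_inj_on)
  have lt: "\<sigma> i < 3" "\<tau> i < 3" if "i < 3" for i
    using \<sigma> \<tau> that by (auto dest: bij_betwE)
  show "arc (g (\<sigma> i) (\<tau> j)) \<and> pathstart (g (\<sigma> i) (\<tau> j)) = (x \<circ> \<sigma>) i \<and>
      pathfinish (g (\<sigma> i) (\<tau> j)) = (y \<circ> \<tau>) j" if "i < 3" "j < 3" for i j
    using K33_arcsD(3)[OF K lt(1)[OF that(1)] lt(2)[OF that(2)]] by simp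
  show "path_image (g (\<sigma> i) (\<tau> j)) \<inter> path_image (g (\<sigma> k) (\<tau> l))
      \<subseteq> {(x \<circ> \<sigma>) i, (y \<circ> \<tau>) j} \<inter> {(x \<circ> \<sigma>) k, (y \<circ> \<tau>) l}"
    if "i < 3" "j < 3" "k < 3" "l < 3" "(i, j) \<noteq> (k, l)" for i j k l
  proof -
    have "(\<sigma> i, \<tau> j) \<noteq> (\<sigma> k, \<tau> l)"
      using that \<sigma> \<tau> by (auto simp: bij_betw_def dest: inj_onD)
    then show ?thesis
      using K33_arcsD(4)[OF K lt(1)[OF that(1)] lt(2)[OF that(2)] lt(1)[OF that(3)] lt(2)[OF that(4)]]
      by simp
  qed
qed

lemma K33_arcs_Union_meet:
  assumes "K33_arcs x y g" "A \<subseteq> {..<3} \<times> {..<3}" "B \<subseteq> {..<3} \<times> {..<3}" "A \<inter> B = {}"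
  shows "(\<Union>(i, j)\<in>A. path_image (g i j)) \<inter> (\<Union>(k, l)\<in>B. path_image (g k l))
    \<subseteq> (\<Union>(i, j)\<in>A. {x i, y j}) \<inter> (\<Union>(k, l)\<in>B. {x k, y l})"
proof
  fix z
  assume "z \<in> (\<Union>(i, j)\<in>A. path_image (g i j)) \<inter> (\<Union>(k, l)\<in>B. path_image (g k l))"
  then obtain i j k l where ij: "(i, j) \<in> A" "z \<in> path_image (g i j)"
    and kl: "(k, l) \<in> B" "z \<in> path_image (g k l)"
    by blast
  moreover have "(i, j) \<noteq> (k, l)"
    using ij(1) kl(1) assms(4) by blast
  ultimately have "z \<in> {x i, y j} \<inter> {x k, y l}"
    using K33_arcsD(4)[OF assms(1), of i j k l] assms(2,3) by blast
  then show "z \<in> (\<Union>(i, j)\<in>A. {x i, y j}) \<inter> (\<Union>(k, l)\<in>B. {x k, y l})"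
    using ij(1) kl(1) by blast
qed

lemma K33_arcs_path:
  assumes K: "K33_arcs x y g" and ik: "i < 3" "k < 3" "i \<noteq> k" and jl: "j < 3" "l < 3" "j \<noteq> l"
  shows "arc (g i j +++ (reversepath (g k j) +++ g k l))"
    and "pathstart (g i j +++ (reversepath (g k j) +++ g k l)) = x i"
    and "pathfinish (g i j +++ (reversepath (g k j) +++ g k l)) = y l"
    and "path_image (g i j +++ (reversepath (g k j) +++ g k l)) =
      path_image (g i j) \<union> path_image (g k j) \<union> path_image (g k l)"
proof -
  have g: "arc (g a b)" "pathstart (g a b) = x a" "pathfinish (g a b) = y b" if "a < 3" "b < 3" for a b
    using K33_arcsD(3)[OF K that] by auto
  have "x i \<noteq> x k" "y j \<noteq> y l"
    using K33_arcsD(1,2)[OF K] ik jl by (auto dest: inj_onD)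
  moreover have "x a \<noteq> y b" if "a < 3" "b < 3" for a b
    using g[OF that] arc_distinct_ends[of "g a b"] by auto
  ultimately have "path_image (g k j) \<inter> path_image (g k l) \<subseteq> {x k}"
    and "path_image (g i j) \<inter> (path_image (g k j) \<union> path_image (g k l)) \<subseteq> {y j}"
    using K33_arcsD(4)[OF K, of k j k l] K33_arcsD(4)[OF K, of i j k j] K33_arcsD(4)[OF K, of i j k l]
      ik jl by auto
  then show "arc (g i j +++ (reversepath (g k j) +++ g k l))"
    and "pathstart (g i j +++ (reversepath (g k j) +++ g k l)) = x i"
    and "pathfinish (g i j +++ (reversepath (g k j) +++ g k l)) = y l"
    and "path_image (g i j +++ (reversepath (g k j) +++ g k l)) =
      path_image (g i j) \<union> path_image (g k j) \<union> path_image (g k l)"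
    using g ik jl by (auto simp: arc_reversepath path_image_join intro!: arc_join)
qed

text \<open>The hexagon \<open>x0 y0 x1 y1 x2 y2\<close>; the remaining arcs \<open>g 0 1\<close>, \<open>g 1 2\<close>, \<open>g 2 0\<close> are its chords.\<close>

definition K33_hexagon :: "(nat \<Rightarrow> nat \<Rightarrow> real \<Rightarrow> 'a::topological_space) \<Rightarrow> 'a set" where
  "K33_hexagon g = path_image (g 0 0) \<union> path_image (g 1 0) \<union> path_image (g 1 1) \<union>
     path_image (g 2 1) \<union> path_image (g 2 2) \<union> path_image (g 0 2)"

lemma K33_arcs_chords_separated:
  fixes g :: "nat \<Rightarrow> nat \<Rightarrow> real \<Rightarrow> complex"
  assumes K: "K33_arcs x y g"
    and C: "C \<in> {inside (K33_hexagon g), outside (K33_hexagon g)}"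
      "endless_image (g 0 1) \<subseteq> C" "endless_image (g 1 2) \<subseteq> C"
  shows False
proof -
  have g: "arc (g i j)" "pathstart (g i j) = x i" "pathfinish (g i j) = y j" if "i < 3" "j < 3" for i j
    using K33_arcsD(3)[OF K that] by auto
  have xy: "x i \<noteq> y j" if "i < 3" "j < 3" for i j
    using g[OF that] arc_distinct_ends[of "g i j"] by auto
  have x: "x 0 \<noteq> x 1" "x 0 \<noteq> x 2" "x 1 \<noteq> x 2" and y: "y 0 \<noteq> y 1" "y 0 \<noteq> y 2" "y 1 \<noteq> y 2"
    using K33_arcsD(1,2)[OF K] by (auto dest: inj_onD)
  note meet = K33_arcs_Union_meet[OF K]
  note distinct = x y xy[of 0 0] xy[of 0 1] xy[of 0 2] xy[of 1 0] xy[of 1 1] xy[of 1 2]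
    xy[of 2 0] xy[of 2 1] xy[of 2 2]
  \<comment> \<open>cut the hexagon at \<open>x0\<close> and \<open>y1\<close>: with the chord \<open>g 0 1\<close> the two halves form a theta graph,
    and the chord \<open>g 1 2\<close> joins the interiors of the halves\<close>
  define h1 where "h1 = g 0 0 +++ (reversepath (g 1 0) +++ g 1 1)"
  define h2 where "h2 = g 0 2 +++ (reversepath (g 2 2) +++ g 2 1)"
  define P1 where "P1 = path_image (g 0 0) \<union> path_image (g 1 0) \<union> path_image (g 1 1)"
  define P2 where "P2 = path_image (g 0 2) \<union> path_image (g 2 2) \<union> path_image (g 2 1)"
  have h1: "arc h1" "pathstart h1 = x 0" "pathfinish h1 = y 1" "path_image h1 = P1"
    using K33_arcs_path[OF K, where i = 0 and j = 0 and k = 1 and l = 1] by (simp_all add: h1_def P1_def)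
  have h2: "arc h2" "pathstart h2 = x 0" "pathfinish h2 = y 1" "path_image h2 = P2"
    using K33_arcs_path[OF K, where i = 0 and j = 2 and k = 2 and l = 1] by (simp_all add: h2_def P2_def)
  have ends: "x i \<in> path_image (g i j)" "y j \<in> path_image (g i j)" if "i < 3" "j < 3" for i j
    using g[OF that] pathstart_in_path_image pathfinish_in_path_image by metis+
  have p12: "parallel_arcs h1 h2"
    using h1 h2 ends meet[of "{(0, 0), (1, 0), (1, 1)}" "{(0, 2), (2, 2), (2, 1)}"] distinct
    unfolding parallel_arcs_def P1_def P2_def by (auto simp: subset_iff)
  have p1e: "parallel_arcs h1 (g 0 1)"
    using h1 g ends meet[of "{(0, 0), (1, 0), (1, 1)}" "{(0, 1)}"] distinct
    unfolding parallel_arcs_def P1_def by (auto simp: subset_iff)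
  have p2e: "parallel_arcs h2 (g 0 1)"
    using h2 g ends meet[of "{(0, 2), (2, 2), (2, 1)}" "{(0, 1)}"] distinct
    unfolding parallel_arcs_def P2_def by (auto simp: subset_iff)
  have disjoint: "endless_image (g 1 2) \<inter> (path_image h1 \<union> path_image h2 \<union> path_image (g 0 1)) = {}"
    using h1(4) h2(4) g meet[of "{(1, 2)}" "{(0, 0), (1, 0), (1, 1), (0, 2), (2, 2), (2, 1), (0, 1)}"]
    unfolding P1_def P2_def endless_image_def by (auto simp: subset_iff)
  have u: "x 1 \<in> closure (endless_image (g 1 2)) \<inter> endless_image h1"
    using path_image_subset_closure_endless_image[of "g 1 2"] g ends h1 distinct
    by (auto simp: P1_def endless_image_def)
  have v: "y 2 \<in> closure (endless_image (g 1 2)) \<inter> endless_image h2"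
    using path_image_subset_closure_endless_image[of "g 1 2"] g ends h2 distinct
    by (auto simp: P2_def endless_image_def)
  have "K33_hexagon g = path_image h1 \<union> path_image h2"
    by (auto simp: K33_hexagon_def h1(4) h2(4) P1_def P2_def)
  with C show False
    using theta_chord_separated[OF p12 p1e p2e connected_endless_image disjoint u v] g by simp
qed

lemma K33_hexagon_rotate:
  "K33_hexagon (\<lambda>i j. g ((i + 1) mod 3) ((j + 1) mod 3)) = K33_hexagon g"
proof -
  have "(0 + 1) mod 3 = (1::nat)" "(1 + 1) mod 3 = (2::nat)" "(2 + 1) mod 3 = (0::nat)"
    by simp_all
  then show ?thesis
    unfolding K33_hexagon_def by (simp only:) blast
qed

lemma K33_arcs_chord_side:
  fixes g :: "nat \<Rightarrow> nat \<Rightarrow> real \<Rightarrow> complex"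
  assumes K: "K33_arcs x y g" and ij: "(i, j) \<in> {(0, 1), (1, 2), (2, 0)}"
  shows "\<exists>C\<in>{inside (K33_hexagon g), outside (K33_hexagon g)}. endless_image (g i j) \<subseteq> C"
proof -
  let ?H = "K33_hexagon g"
  let ?hex = "{(0, 0), (1, 0), (1, 1), (2, 1), (2, 2), (0, 2)} :: (nat \<times> nat) set"
  have hex: "?H = (\<Union>(k, l)\<in>?hex. path_image (g k l))"
    by (auto simp: K33_hexagon_def)
  have "closed (path_image (g k l))" if "k < 3" "l < 3" for k l
    using K33_arcsD(3)[OF K that] by (simp add: arc_imp_path closed_path_image)
  then have "closed ?H"
    unfolding K33_hexagon_def by (intro closed_Un) simp_all
  have ij': "i < 3" "j < 3" "{(i, j)} \<inter> ?hex = {}"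
    using ij by auto
  then have "arc (g i j)"
    using K33_arcsD(3)[OF K] by blast
  have "path_image (g i j) \<inter> ?H \<subseteq> {x i, y j}"
    using K33_arcs_Union_meet[OF K, of "{(i, j)}" ?hex] ij' unfolding hex by auto
  then have "endless_image (g i j) \<inter> ?H = {}"
    using K33_arcsD(3)[OF K ij'(1,2)] by (auto simp: endless_image_def)
  then show ?thesis
    using connected_subset_inside_or_outside[OF connected_endless_image[OF \<open>arc (g i j)\<close>] _ \<open>closed ?H\<close>]
    by blast
qed

theorem not_K33_arcs:
  fixes g :: "nat \<Rightarrow> nat \<Rightarrow> real \<Rightarrow> complex"
  shows "\<not> K33_arcs x y g"
proof
  assume K: "K33_arcs x y g"
  let ?H = "K33_hexagon g"
  \<comment> \<open>rotating the indices once or twice turns the equally placed chords into \<open>g 0 1\<close> and \<open>g 1 2\<close>\<close>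
  define \<rho> :: "nat \<Rightarrow> nat" where "\<rho> i = (i + 1) mod 3" for i
  have \<rho>: "bij_betw \<rho> {..<3} {..<3}"
  proof -
    have "{..<3::nat} = {0, 1, 2}"
      by auto
    then show ?thesis
      by (simp add: bij_betw_def \<rho>_def numeral_2_eq_2 insert_commute)
  qed
  note K' = K33_arcs_permute[OF K \<rho> \<rho>]
  note K'' = K33_arcs_permute[OF K' \<rho> \<rho>]
  have H: "K33_hexagon (\<lambda>i j. g (\<rho> i) (\<rho> j)) = ?H"
    "K33_hexagon (\<lambda>i j. g (\<rho> (\<rho> i)) (\<rho> (\<rho> j))) = ?H"
    unfolding \<rho>_def by (simp_all only: K33_hexagon_rotate[of g]
        K33_hexagon_rotate[of "\<lambda>i j. g ((i + 1) mod 3) ((j + 1) mod 3)"])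
  have chords: "g (\<rho> 0) (\<rho> 1) = g 1 2" "g (\<rho> 1) (\<rho> 2) = g 2 0"
    "g (\<rho> (\<rho> 0)) (\<rho> (\<rho> 1)) = g 2 0" "g (\<rho> (\<rho> 1)) (\<rho> (\<rho> 2)) = g 0 1"
    by (simp_all add: \<rho>_def numeral_2_eq_2)
  obtain C01 C12 C20 where C: "C01 \<in> {inside ?H, outside ?H}" "C12 \<in> {inside ?H, outside ?H}"
    "C20 \<in> {inside ?H, outside ?H}" "endless_image (g 0 1) \<subseteq> C01"
    "endless_image (g 1 2) \<subseteq> C12" "endless_image (g 2 0) \<subseteq> C20"
    using K33_arcs_chord_side[OF K, of 0 1] K33_arcs_chord_side[OF K, of 1 2]
      K33_arcs_chord_side[OF K, of 2 0] by auto
  then consider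
      C where "C \<in> {inside ?H, outside ?H}" "endless_image (g 0 1) \<subseteq> C" "endless_image (g 1 2) \<subseteq> C"
    | C where "C \<in> {inside ?H, outside ?H}" "endless_image (g 1 2) \<subseteq> C" "endless_image (g 2 0) \<subseteq> C"
    | C where "C \<in> {inside ?H, outside ?H}" "endless_image (g 2 0) \<subseteq> C" "endless_image (g 0 1) \<subseteq> C"
    by (metis insert_iff singletonD)
  then show False
  proof cases
    case 1
    then show False using K33_arcs_chords_separated[OF K] by blast
  next
    case 2
    then show False using K33_arcs_chords_separated[OF K'] H(1) chords by simp
  next
    case 3
    then show False using K33_arcs_chords_separated[OF K''] H(2) chords by simp
  qed
qed

section \<open>Straight-line drawings\<close>

lemma straight_line_K33_arcs:
  fixes x y :: "nat \<Rightarrow> complex"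
  assumes "inj_on x {..<3}" "inj_on y {..<3}" and xy: "\<And>i j. i < 3 \<Longrightarrow> j < 3 \<Longrightarrow> x i \<noteq> y j"
    and seg: "\<And>i j k l. i < 3 \<Longrightarrow> j < 3 \<Longrightarrow> k < 3 \<Longrightarrow> l < 3 \<Longrightarrow> (i, j) \<noteq> (0, 0) \<Longrightarrow>
      (k, l) \<noteq> (0, 0) \<Longrightarrow> (i, j) \<noteq> (k, l) \<Longrightarrow>
      closed_segment (x i) (y j) \<inter> closed_segment (x k) (y l) \<subseteq> {x i, y j} \<inter> {x k, y l}"
    and g00: "arc g00" "pathstart g00 = x 0" "pathfinish g00 = y 0"
      "\<And>k l. k < 3 \<Longrightarrow> l < 3 \<Longrightarrow> (k, l) \<noteq> (0, 0) \<Longrightarrow>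
        path_image g00 \<inter> closed_segment (x k) (y l) \<subseteq> {x 0, y 0} \<inter> {x k, y l}"
  shows "K33_arcs x y (\<lambda>i j. if (i, j) = (0, 0) then g00 else linepath (x i) (y j))"
proof (rule K33_arcsI)
  show "inj_on x {..<3}" "inj_on y {..<3}"
    by fact+
  show "arc (if (i, j) = (0, 0) then g00 else linepath (x i) (y j)) \<and>
      pathstart (if (i, j) = (0, 0) then g00 else linepath (x i) (y j)) = x i \<and>
      pathfinish (if (i, j) = (0, 0) then g00 else linepath (x i) (y j)) = y j"
    if "i < 3" "j < 3" for i j
    using g00 xy[OF that] by (auto simp: arc_linepath)
  show "path_image (if (i, j) = (0, 0) then g00 else linepath (x i) (y j)) \<inter>
      path_image (if (k, l) = (0, 0) then g00 else linepath (x k) (y l)) \<subseteq> {x i, y j} \<inter> {x k, y l}"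
    if "i < 3" "j < 3" "k < 3" "l < 3" "(i, j) \<noteq> (k, l)" for i j k l
    using that seg[OF that(1-4)] g00(4)[of i j] g00(4)[of k l] by (auto simp: Int_commute)
qed

text \<open>The Jordan curve theorem and winding numbers are available for complex-valued paths.\<close>

definition complex_of_vec2 :: "real^2 \<Rightarrow> complex" where
  "complex_of_vec2 v = Complex (v$1) (v$2)"

lemma linear_complex_of_vec2: "linear complex_of_vec2"
  by (auto simp: linear_iff complex_eq_iff complex_of_vec2_def)

lemma inj_complex_of_vec2: "inj complex_of_vec2"
  by (auto simp: inj_def complex_eq_iff vec_eq_iff forall_2 complex_of_vec2_def)

lemma planar_straight_line_segments_meet:
  assumes "planar_straight_line W F p" "{u, v} \<in> F" "{u', v'} \<in> F" "{u, v} \<noteq> {u', v'}"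
  shows "closed_segment (complex_of_vec2 (p u)) (complex_of_vec2 (p v)) \<inter>
      closed_segment (complex_of_vec2 (p u')) (complex_of_vec2 (p v'))
    \<subseteq> {complex_of_vec2 (p u), complex_of_vec2 (p v)} \<inter> {complex_of_vec2 (p u'), complex_of_vec2 (p v')}"
proof -
  have "closed_segment (p u) (p v) \<inter> closed_segment (p u') (p v') \<subseteq> p ` ({u, v} \<inter> {u', v'})"
    using assms(1)[unfolded planar_straight_line_def, THEN conjunct2, THEN conjunct2, rule_format,
        OF assms(2,3) refl refl assms(4)] .
  then have "complex_of_vec2 ` (closed_segment (p u) (p v) \<inter> closed_segment (p u') (p v'))
      \<subseteq> complex_of_vec2 ` p ` ({u, v} \<inter> {u', v'})"
    by (rule image_mono)
  then show ?thesis
    by (auto simp: closed_segment_linear_image[OF linear_complex_of_vec2, symmetric]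
        image_Int[OF inj_complex_of_vec2])
qed

lemma planar_straight_line_inj:
  "planar_straight_line W F p \<Longrightarrow> inj_on (complex_of_vec2 \<circ> p) W"
  using inj_complex_of_vec2 unfolding planar_straight_line_def
  by (auto intro: comp_inj_on inj_on_subset)

lemma planar_straight_line_path_arc:
  assumes pl: "planar_straight_line W F p"
    and W: "u \<in> W" "b \<in> W" "v \<in> W" and ne: "u \<noteq> b" "b \<noteq> v" "u \<noteq> v"
    and F: "{u, b} \<in> F" "{b, v} \<in> F"
  defines "z \<equiv> complex_of_vec2 \<circ> p"
  shows "arc (linepath (z u) (z b) +++ linepath (z b) (z v))"
    and "\<And>u' v'. {u', v'} \<in> F \<Longrightarrow> u' \<in> W \<Longrightarrow> v' \<in> W \<Longrightarrow> b \<notin> {u', v'} \<Longrightarrow>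
      path_image (linepath (z u) (z b) +++ linepath (z b) (z v)) \<inter> closed_segment (z u') (z v')
        \<subseteq> {z u, z v} \<inter> {z u', z v'}"
proof -
  have z: "inj_on z W"
    unfolding z_def by (rule planar_straight_line_inj[OF pl])
  note seg = planar_straight_line_segments_meet[OF pl,
      folded comp_apply[of complex_of_vec2 p], folded z_def]
  have "z u \<noteq> z b" "z b \<noteq> z v" "z u \<noteq> z v"
    using W ne inj_onD[OF z] by blast+
  moreover have "{u, b} \<noteq> {b, v}"
    using ne by (auto simp: doubleton_eq_iff)
  ultimately have "closed_segment (z u) (z b) \<inter> closed_segment (z b) (z v) \<subseteq> {z b}"
    using seg[OF F] by auto
  with \<open>z u \<noteq> z b\<close> \<open>z b \<noteq> z v\<close> show "arc (linepath (z u) (z b) +++ linepath (z b) (z v))"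
    by (intro arc_join) (auto simp: arc_linepath)
  fix u' v' assume F': "{u', v'} \<in> F" and W': "u' \<in> W" "v' \<in> W" and b: "b \<notin> {u', v'}"
  then have "{u, b} \<noteq> {u', v'}" "{b, v} \<noteq> {u', v'}" "z b \<notin> {z u', z v'}"
    using W(2) inj_onD[OF z] by (auto simp: doubleton_eq_iff)
  then show "path_image (linepath (z u) (z b) +++ linepath (z b) (z v)) \<inter> closed_segment (z u') (z v')
      \<subseteq> {z u, z v} \<inter> {z u', z v'}"
    using seg[OF F(1) F'] seg[OF F(2) F'] by (auto simp: path_image_join)
qed

lemma planar_straight_line_no_K33:
  fixes X Y :: "nat \<Rightarrow> 'v"
  assumes pl: "planar_straight_line W F p"
    and X: "inj_on X {..<3}" "X ` {..<3} \<subseteq> W" and Y: "inj_on Y {..<3}" "Y ` {..<3} \<subseteq> W"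
    and XY: "\<And>i j. i < 3 \<Longrightarrow> j < 3 \<Longrightarrow> X i \<noteq> Y j"
    and E: "\<And>i j. i < 3 \<Longrightarrow> j < 3 \<Longrightarrow> (i, j) \<noteq> (0, 0) \<Longrightarrow> {X i, Y j} \<in> F"
    and E00: "{X 0, Y 0} \<in> F \<or> (\<exists>b \<in> W - X ` {..<3} - Y ` {..<3}. {X 0, b} \<in> F \<and> {b, Y 0} \<in> F)"
  shows False
proof -
  define z where "z = complex_of_vec2 \<circ> p"
  have z: "inj_on z W"
    unfolding z_def by (rule planar_straight_line_inj[OF pl])
  note seg = planar_straight_line_segments_meet[OF pl,
      folded comp_apply[of complex_of_vec2 p], folded z_def]
  have edges_ne: "{X i, Y j} \<noteq> {X k, Y l}"
    if "i < 3" "j < 3" "k < 3" "l < 3" "(i, j) \<noteq> (k, l)" for i j k l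
    using that X(1) Y(1) XY by (auto simp: doubleton_eq_iff dest: inj_onD)
  define x where "x = z \<circ> X"
  define y where "y = z \<circ> Y"
  have XYW: "X i \<in> W" "Y i \<in> W" if "i < 3" for i
    using X(2) Y(2) that by auto
  have xy: "x i \<noteq> y j" if "i < 3" "j < 3" for i j
    using XY[OF that] XYW that inj_onD[OF z] by (fastforce simp: x_def y_def)
  obtain g00 where g00: "arc g00" "pathstart g00 = x 0" "pathfinish g00 = y 0"
    "\<And>k l. k < 3 \<Longrightarrow> l < 3 \<Longrightarrow> (k, l) \<noteq> (0, 0) \<Longrightarrow>
      path_image g00 \<inter> closed_segment (x k) (y l) \<subseteq> {x 0, y 0} \<inter> {x k, y l}"
  proof (cases "{X 0, Y 0} \<in> F")
    case True
    show thesis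
    proof
      show "arc (linepath (x 0) (y 0))"
        using xy[of 0 0] by (simp add: arc_linepath)
      show "path_image (linepath (x 0) (y 0)) \<inter> closed_segment (x k) (y l) \<subseteq> {x 0, y 0} \<inter> {x k, y l}"
        if "k < 3" "l < 3" "(k, l) \<noteq> (0, 0)" for k l
        using seg[OF True E[OF that] edges_ne[of 0 0 k l]] that by (simp add: x_def y_def)
    qed simp_all
  next
    case False
    then obtain b where b: "b \<in> W" "b \<notin> X ` {..<3}" "b \<notin> Y ` {..<3}" "{X 0, b} \<in> F" "{b, Y 0} \<in> F"
      using E00 by blast
    have W0: "X 0 \<in> W" "Y 0 \<in> W"
      using XYW by simp_all
    have "X 0 \<noteq> b" "b \<noteq> Y 0" "X 0 \<noteq> Y 0"
      using b XY[of 0 0] by auto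
    note path = planar_straight_line_path_arc[OF pl W0(1) b(1) W0(2) this b(4,5), folded z_def]
    show thesis
    proof
      show "path_image (linepath (x 0) (z b) +++ linepath (z b) (y 0)) \<inter> closed_segment (x k) (y l)
        \<subseteq> {x 0, y 0} \<inter> {x k, y l}" if "k < 3" "l < 3" "(k, l) \<noteq> (0, 0)" for k l
        using path(2)[OF E[OF that] XYW(1)[OF that(1)] XYW(2)[OF that(2)]] b(2,3) that
        by (auto simp: x_def y_def)
    qed (use path(1) in \<open>simp_all add: x_def y_def\<close>)
  qed
  have inj: "inj_on x {..<3}" "inj_on y {..<3}"
    using X Y z by (auto simp: x_def y_def intro: comp_inj_on inj_on_subset)
  have segs: "closed_segment (x i) (y j) \<inter> closed_segment (x k) (y l) \<subseteq> {x i, y j} \<inter> {x k, y l}"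
    if "i < 3" "j < 3" "k < 3" "l < 3" "(i, j) \<noteq> (0, 0)" "(k, l) \<noteq> (0, 0)" "(i, j) \<noteq> (k, l)"
    for i j k l
    using seg[OF E[OF that(1,2,5)] E[OF that(3,4,6)] edges_ne[OF that(1-4,7)]] by (simp add: x_def y_def)
  show False
    using straight_line_K33_arcs[OF inj xy segs g00] not_K33_arcs by blast
qed

section \<open>The graph \<open>G\<close> and its storyplans\<close>

lemma G_edges_apex:
  assumes "i \<in> {1..4}" "j \<in> {1..2}" "k \<in> {1..4}"
  shows "{Qv i j, Av k} \<in> G_edges" "{Qv i j, Bv k} \<in> G_edges" "{Qv i j, Cv k} \<in> G_edges"
    and "{Rv i j, Qv i j} \<in> G_edges"
  using assms unfolding G_edges_def by (intro UnI1 UnI2; auto)+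

lemma G_edges_A_cycle: "{Av 1, Av 2} \<in> G_edges" "{Av 2, Av 3} \<in> G_edges" "{Av 3, Av 4} \<in> G_edges"
    "{Av 4, Av 1} \<in> G_edges"
  unfolding G_edges_def nxt_def by (intro UnI1 UnI2; force)+

lemma G_verts_iff:
  "Av k \<in> G_verts \<longleftrightarrow> k \<in> {1..4}" "Bv k \<in> G_verts \<longleftrightarrow> k \<in> {1..4}" "Cv k \<in> G_verts \<longleftrightarrow> k \<in> {1..4}"
  "Qv i j \<in> G_verts \<longleftrightarrow> i \<in> {1..4} \<and> j \<in> {1..2}" "Rv i j \<in> G_verts \<longleftrightarrow> i \<in> {1..4} \<and> j \<in> {1..2}"
  unfolding G_verts_def by auto

lemma cycle_verts_subset_G_verts: "cycle_verts \<subseteq> G_verts"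
  unfolding cycle_verts_def G_verts_def by blast

lemma cycle_verts_eq: "cycle_verts = Av ` {1..4} \<union> Bv ` {1..4} \<union> Cv ` {1..4}"
  unfolding cycle_verts_def by auto

lemma storyplan_interval:
  assumes "planar_geometric_storyplan V E l I p" "v \<in> V"
  shows "\<exists>a b. I v = {a..b}" and "I v \<noteq> {}" and "I v \<subseteq> {1..l}"
  using assms by (auto simp: planar_geometric_storyplan_def storyplan_intervals_def)

lemma storyplan_edge_meet:
  assumes "planar_geometric_storyplan V E l I p" "{u, v} \<in> E"
  shows "I u \<inter> I v \<noteq> {}"
  using assms unfolding planar_geometric_storyplan_def storyplan_intervals_def by blast

lemma storyplan_frame_planar:
  assumes "planar_geometric_storyplan V E l I p" "v \<in> V" "\<tau> \<in> I v"
  shows "planar_straight_line (frame_verts V I \<tau>) (frame_edges E I \<tau>) p"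
  using assms storyplan_interval(3)[OF assms(1,2)] unfolding planar_geometric_storyplan_def by blast

lemma frame_edgesI: "{u, v} \<in> E \<Longrightarrow> \<tau> \<in> I u \<Longrightarrow> \<tau> \<in> I v \<Longrightarrow> {u, v} \<in> frame_edges E I \<tau>"
  unfolding frame_edges_def by auto

lemma frame_not_three_apices_three_A:
  assumes sp: "planar_geometric_storyplan G_verts G_edges l I p"
    and Q: "Q \<subseteq> {1..4} \<times> {1..2}" "card Q = 3" and A: "A \<subseteq> {1..4}" "card A = 3"
    and vis: "\<And>i j. (i, j) \<in> Q \<Longrightarrow> \<tau> \<in> I (Qv i j)" "\<And>k. k \<in> A \<Longrightarrow> \<tau> \<in> I (Av k)"
  shows False
proof -
  obtain hQ where hQ: "bij_betw hQ {..<3::nat} Q"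
    using ex_bij_betw_nat_finite[of Q] Q finite_subset[OF Q(1)] by (auto simp: atLeast0LessThan)
  obtain hA where hA: "bij_betw hA {..<3::nat} A"
    using ex_bij_betw_nat_finite[of A] A finite_subset[OF A(1)] by (auto simp: atLeast0LessThan)
  define X where "X n = Qv (fst (hQ n)) (snd (hQ n))" for n
  define Y where "Y n = Av (hA n)" for n
  have XQ: "hQ n \<in> Q" and YA: "hA n \<in> A" if "n < 3" for n
    using hQ hA that by (auto dest: bij_betwE)
  have vis': "\<tau> \<in> I (X n)" "\<tau> \<in> I (Y n)" "X n \<in> G_verts" "Y n \<in> G_verts" if "n < 3" for n
    using vis XQ[OF that] YA[OF that] Q(1) A(1) by (auto simp: X_def Y_def G_verts_iff)
  have Y0: "Y 0 \<in> G_verts" "\<tau> \<in> I (Y 0)"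
    using vis' by simp_all
  show False
  proof (rule planar_straight_line_no_K33[OF storyplan_frame_planar[OF sp Y0], of X Y])
    show "inj_on X {..<3}"
      using hQ by (auto simp: X_def bij_betw_def inj_on_def prod_eq_iff)
    show "inj_on Y {..<3}"
      using hA by (auto simp: Y_def bij_betw_def inj_on_def)
    show "X ` {..<3} \<subseteq> frame_verts G_verts I \<tau>" "Y ` {..<3} \<subseteq> frame_verts G_verts I \<tau>"
      using vis' by (auto simp: frame_verts_def)
    show "X i \<noteq> Y j" for i j
      by (simp add: X_def Y_def)
    have "{X i, Y j} \<in> frame_edges G_edges I \<tau>" if "i < 3" "j < 3" for i j
    proof (rule frame_edgesI)
      have "fst (hQ i) \<in> {1..4}" "snd (hQ i) \<in> {1..2}" "hA j \<in> {1..4}"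
        using XQ[OF that(1)] YA[OF that(2)] Q(1) A(1) by auto
      then show "{X i, Y j} \<in> G_edges"
        unfolding X_def Y_def by (rule G_edges_apex(1))
    qed (use vis' that in auto)
    then show "\<And>i j. i < 3 \<Longrightarrow> j < 3 \<Longrightarrow> (i, j) \<noteq> (0, 0) \<Longrightarrow> {X i, Y j} \<in> frame_edges G_edges I \<tau>"
      and "{X 0, Y 0} \<in> frame_edges G_edges I \<tau> \<or> (\<exists>b\<in>frame_verts G_verts I \<tau> - X ` {..<3} - Y ` {..<3}.
        {X 0, b} \<in> frame_edges G_edges I \<tau> \<and> {b, Y 0} \<in> frame_edges G_edges I \<tau>)"
      by simp_all
  qed
qed

lemma frame_not_two_apices_A_cycle:
  assumes sp: "planar_geometric_storyplan G_verts G_edges l I p"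
    and ij: "i \<in> {1..4}" "j \<in> {1..2}" "i' \<in> {1..4}" "j' \<in> {1..2}" "(i, j) \<noteq> (i', j')"
    and vis: "\<tau> \<in> I (Qv i j)" "\<tau> \<in> I (Qv i' j')" "\<And>k. k \<in> {1..4} \<Longrightarrow> \<tau> \<in> I (Av k)"
      "\<tau> \<in> I (Bv 1)"
  shows False
proof -
  \<comment> \<open>\<open>{q, a1, a3}\<close> and \<open>{q', a2, a4}\<close> span a \<open>K33\<close> whose edge \<open>q q'\<close> is subdivided by \<open>b1\<close>\<close>
  define X where "X n = (if n = 0 then Qv i j else if n = 1 then Av 1 else Av 3)" for n :: nat
  define Y where "Y n = (if n = 0 then Qv i' j' else if n = 1 then Av 2 else Av 4)" for n :: nat
  have lt3: "n < 3 \<longleftrightarrow> n = 0 \<or> n = 1 \<or> n = 2" for n :: nat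
    by auto
  have V: "X n \<in> G_verts" "Y n \<in> G_verts" "\<tau> \<in> I (X n)" "\<tau> \<in> I (Y n)" for n
    using ij vis by (simp_all add: X_def Y_def G_verts_iff)
  have "{Qv i j, Av 2} \<in> G_edges" "{Qv i j, Av 4} \<in> G_edges"
    "{Av 1, Qv i' j'} \<in> G_edges" "{Av 3, Qv i' j'} \<in> G_edges"
    "{Av 1, Av 4} \<in> G_edges" "{Av 3, Av 2} \<in> G_edges"
    using G_edges_apex(1)[OF ij(1,2), of 2] G_edges_apex(1)[OF ij(1,2), of 4]
      G_edges_apex(1)[OF ij(3,4), of 1] G_edges_apex(1)[OF ij(3,4), of 3] G_edges_A_cycle
    by (simp_all add: insert_commute)
  then have E: "{X n, Y m} \<in> G_edges" if "n < 3" "m < 3" "(n, m) \<noteq> (0, 0)" for n m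
    using that G_edges_A_cycle by (auto simp: lt3 X_def Y_def)
  have B: "{X 0, Bv 1} \<in> G_edges" "{Bv 1, Y 0} \<in> G_edges"
    using G_edges_apex(2)[OF ij(1,2), of 1] G_edges_apex(2)[OF ij(3,4), of 1]
    by (simp_all add: X_def Y_def insert_commute)
  show False
  proof (rule planar_straight_line_no_K33[OF storyplan_frame_planar[OF sp V(1,3)], of X Y])
    show "inj_on X {..<3}" "inj_on Y {..<3}"
      by (auto simp: inj_on_def lt3 X_def Y_def)
    show "X ` {..<3} \<subseteq> frame_verts G_verts I \<tau>" "Y ` {..<3} \<subseteq> frame_verts G_verts I \<tau>"
      using V by (auto simp: frame_verts_def)
    show "X n \<noteq> Y m" if "n < 3" "m < 3" for n m
      using ij(5) that by (auto simp: lt3 X_def Y_def)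
    show "{X n, Y m} \<in> frame_edges G_edges I \<tau>" if "n < 3" "m < 3" "(n, m) \<noteq> (0, 0)" for n m
      using E[OF that] V(3,4) by (rule frame_edgesI)
    have "Bv 1 \<in> frame_verts G_verts I \<tau> - X ` {..<3} - Y ` {..<3}"
      using vis(4) by (auto simp: frame_verts_def G_verts_iff X_def Y_def)
    moreover have "{X 0, Bv 1} \<in> frame_edges G_edges I \<tau>" "{Bv 1, Y 0} \<in> frame_edges G_edges I \<tau>"
      using B V vis(4) by (auto intro: frame_edgesI)
    ultimately show "{X 0, Y 0} \<in> frame_edges G_edges I \<tau> \<or>
      (\<exists>b\<in>frame_verts G_verts I \<tau> - X ` {..<3} - Y ` {..<3}.
        {X 0, b} \<in> frame_edges G_edges I \<tau> \<and> {b, Y 0} \<in> frame_edges G_edges I \<tau>)"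
      by blast
  qed
qed

lemma apex_meets_cycle_verts:
  assumes sp: "planar_geometric_storyplan G_verts G_edges l I p"
    and "i \<in> {1..4}" "j \<in> {1..2}" "v \<in> cycle_verts"
  shows "I (Qv i j) \<inter> I v \<noteq> {}"
  using assms(4) G_edges_apex[OF assms(2,3)] storyplan_edge_meet[OF sp]
  unfolding cycle_verts_eq by blast

lemma A_cycle_has_meeting_chord:
  assumes sp: "planar_geometric_storyplan G_verts G_edges l I p"
  shows "I (Av 1) \<inter> I (Av 3) \<noteq> {} \<or> I (Av 2) \<inter> I (Av 4) \<noteq> {}"
proof -
  have "\<exists>a b. I (Av k) = {a..b}" if "k \<in> {1..4}" for k
    using storyplan_interval(1)[OF sp] that by (simp add: G_verts_iff)
  moreover have "I (Av 2) \<inter> I (Av 1) \<noteq> {}" "I (Av 2) \<inter> I (Av 3) \<noteq> {}"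
    "I (Av 4) \<inter> I (Av 1) \<noteq> {}" "I (Av 4) \<inter> I (Av 3) \<noteq> {}"
    using storyplan_edge_meet[OF sp] G_edges_A_cycle by (metis Int_commute)+
  ultimately show ?thesis
    using intervals_meeting_disjoint_pair_meet[of "I (Av 2)" "I (Av 4)" "I (Av 1)" "I (Av 3)"] by simp
qed

lemma three_A_pairwise_meet:
  assumes sp: "planar_geometric_storyplan G_verts G_edges l I p"
  obtains A where "A \<subseteq> {1..4}" "card A = 3" "\<And>k k'. k \<in> A \<Longrightarrow> k' \<in> A \<Longrightarrow> I (Av k) \<inter> I (Av k') \<noteq> {}"
proof -
  have self: "I (Av k) \<inter> I (Av k) \<noteq> {}" if "k \<in> {1..4}" for k
    using storyplan_interval(2)[OF sp] that by (simp add: G_verts_iff)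
  have edges: "I (Av 1) \<inter> I (Av 2) \<noteq> {}" "I (Av 2) \<inter> I (Av 3) \<noteq> {}" "I (Av 3) \<inter> I (Av 4) \<noteq> {}"
    using storyplan_edge_meet[OF sp] G_edges_A_cycle by blast+
  from A_cycle_has_meeting_chord[OF sp] show thesis
  proof
    assume chord: "I (Av 1) \<inter> I (Av 3) \<noteq> {}"
    show thesis
      by (rule that[of "{1, 2, 3}"]) (use self edges chord in \<open>auto simp: Int_commute\<close>)
  next
    assume chord: "I (Av 2) \<inter> I (Av 4) \<noteq> {}"
    show thesis
      by (rule that[of "{2, 3, 4}"]) (use self edges chord in \<open>auto simp: Int_commute\<close>)
  qed
qed

lemma apices_meet_across_cycle_gap:
  assumes sp: "planar_geometric_storyplan G_verts G_edges l I p"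
    and uw: "u \<in> cycle_verts" "w \<in> cycle_verts" "I u \<inter> I w = {}"
    and ij: "(i, j) \<in> {1..4} \<times> {1..2}" "(i', j') \<in> {1..4} \<times> {1..2}"
  shows "I (Qv i j) \<inter> I (Qv i' j') \<noteq> {}"
proof (rule intervals_meeting_disjoint_pair_meet[OF _ _ _ _ uw(3)])
  show "\<exists>a b. I (Qv i j) = {a..b}" "\<exists>a b. I (Qv i' j') = {a..b}"
    "\<exists>a b. I u = {a..b}" "\<exists>a b. I w = {a..b}"
    using ij uw(1,2) cycle_verts_subset_G_verts storyplan_interval(1)[OF sp] by (auto simp: G_verts_iff)
  show "I (Qv i j) \<inter> I u \<noteq> {}" "I (Qv i j) \<inter> I w \<noteq> {}"
    "I (Qv i' j') \<inter> I u \<noteq> {}" "I (Qv i' j') \<inter> I w \<noteq> {}"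
    using ij uw(1,2) apex_meets_cycle_verts[OF sp] by auto
qed

lemma cycle_verts_intervals_meet:
  assumes sp: "planar_geometric_storyplan G_verts G_edges l I p"
    and "u \<in> cycle_verts" "w \<in> cycle_verts"
  shows "I u \<inter> I w \<noteq> {}"
proof
  assume uw: "I u \<inter> I w = {}"
  have interval: "\<exists>a b. I v = {a..b}" if "v \<in> G_verts" for v
    using storyplan_interval(1)[OF sp that] .
  note apices_meet = apices_meet_across_cycle_gap[OF sp assms(2,3) uw]
  obtain A where A: "A \<subseteq> {1..4}" "card A = 3"
    and A_meet: "\<And>k k'. k \<in> A \<Longrightarrow> k' \<in> A \<Longrightarrow> I (Av k) \<inter> I (Av k') \<noteq> {}"
    using three_A_pairwise_meet[OF sp] by blast
  define Q :: "(nat \<times> nat) set" where "Q = {(1, 1), (1, 2), (2, 1)}"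
  define S where "S = (\<lambda>(i, j). Qv i j) ` Q \<union> Av ` A"
  have "S \<subseteq> G_verts"
    using A(1) by (auto simp: S_def Q_def G_verts_iff)
  then have S_intervals: "\<exists>a b. I v = {a..b}" if "v \<in> S" for v
    using interval that by blast
  have S_meet: "I v \<inter> I v' \<noteq> {}" if "v \<in> S" "v' \<in> S" for v v'
  proof -
    have mem: "(\<exists>i j. (i, j) \<in> {1..4} \<times> {1..2} \<and> v = Qv i j) \<or> (\<exists>k\<in>A. v = Av k)" if "v \<in> S" for v
      using that by (auto simp: S_def Q_def)
    have QA: "I (Qv i j) \<inter> I (Av k) \<noteq> {}" "I (Av k) \<inter> I (Qv i j) \<noteq> {}"
      if "(i, j) \<in> {1..4} \<times> {1..2}" "k \<in> A" for i j k
      using apex_meets_cycle_verts[OF sp, of i j "Av k"] that A(1)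
      by (auto simp: cycle_verts_def Int_commute[of "I (Av k)"])
    show ?thesis
      using mem[OF that(1)] mem[OF that(2)] apices_meet A_meet QA by (elim disjE exE conjE bexE) simp_all
  qed
  have "finite S" "S \<noteq> {}"
    using A(1) finite_subset[of A] by (auto simp: S_def Q_def)
  then obtain L R where "L \<le> R" "(\<Inter>v\<in>S. I v) = {L..R}"
    using interval_Helly[of S I, OF _ _ S_intervals S_meet] by blast
  then have "L \<in> I v" if "v \<in> S" for v
    using that by auto
  then show False
    using frame_not_three_apices_three_A[OF sp _ _ A, of Q L] by (auto simp: S_def Q_def)
qed

lemma cycle_verts_window:
  assumes sp: "planar_geometric_storyplan G_verts G_edges l I p"
  obtains L R where "(\<Inter>v\<in>cycle_verts. I v) = {L..R}"
proof -
  have "finite cycle_verts" "cycle_verts \<noteq> {}"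
    by (auto simp: cycle_verts_eq)
  moreover have "\<exists>a b. I v = {a..b}" if "v \<in> cycle_verts" for v
    using storyplan_interval(1)[OF sp] that by (auto simp: cycle_verts_eq G_verts_iff)
  ultimately show thesis
    using interval_Helly[of cycle_verts I, OF _ _ _ cycle_verts_intervals_meet[OF sp]] that by blast
qed

lemma apex_meets_cycle_verts_window:
  assumes sp: "planar_geometric_storyplan G_verts G_edges l I p" and ij: "i \<in> {1..4}" "j \<in> {1..2}"
  shows "I (Qv i j) \<inter> (\<Inter>v\<in>cycle_verts. I v) \<noteq> {}"
proof -
  let ?S = "insert (Qv i j) cycle_verts"
  have "finite ?S" "?S \<noteq> {}"
    by (auto simp: cycle_verts_eq)
  moreover have "\<exists>a b. I v = {a..b}" if "v \<in> ?S" for v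
    using storyplan_interval(1)[OF sp] that ij by (auto simp: cycle_verts_eq G_verts_iff)
  moreover have "I v \<inter> I w \<noteq> {}" if "v \<in> ?S" "w \<in> ?S" for v w
  proof -
    have "I (Qv i j) \<inter> I (Qv i j) \<noteq> {}"
      using storyplan_interval(2)[OF sp, of "Qv i j"] ij by (simp add: G_verts_iff)
    moreover have "I (Qv i j) \<inter> I u \<noteq> {}" "I u \<inter> I (Qv i j) \<noteq> {}" if "u \<in> cycle_verts" for u
      using apex_meets_cycle_verts[OF sp ij that] by (simp_all add: Int_commute)
    ultimately show ?thesis
      using \<open>v \<in> ?S\<close> \<open>w \<in> ?S\<close> cycle_verts_intervals_meet[OF sp] by blast
  qed
  ultimately obtain L R where "L \<le> R" "(\<Inter>v\<in>?S. I v) = {L..R}"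
    using interval_Helly[of ?S I] by blast
  then have "L \<in> I (Qv i j) \<inter> (\<Inter>v\<in>cycle_verts. I v)"
    by (metis INT_insert atLeastAtMost_iff order_refl)
  then show ?thesis
    by blast
qed

lemma apex_unique_in_cycle_verts_window:
  assumes sp: "planar_geometric_storyplan G_verts G_edges l I p"
    and "x \<in> {1..4} \<times> {1..2}" "y \<in> {1..4} \<times> {1..2}" "\<tau> \<in> (\<Inter>v\<in>cycle_verts. I v)"
    and "\<tau> \<in> I (Qv (fst x) (snd x))" "\<tau> \<in> I (Qv (fst y) (snd y))"
  shows "x = y"
proof (rule ccontr)
  assume "x \<noteq> y"
  then have "(fst x, snd x) \<noteq> (fst y, snd y)"
    by simp
  moreover have "\<tau> \<in> I (Av k)" if "k \<in> {1..4}" for k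
    using assms(4) that by (auto simp: cycle_verts_def)
  moreover have "\<tau> \<in> I (Bv 1)"
    using assms(4) by (auto simp: cycle_verts_def)
  moreover have "fst x \<in> {1..4}" "snd x \<in> {1..2}" "fst y \<in> {1..4}" "snd y \<in> {1..2}"
    using assms(2,3) by auto
  ultimately show False
    using frame_not_two_apices_A_cycle[OF sp _ _ _ _ _ assms(5,6)] by blast
qed

lemma card_apices_within_cycle_verts_window:
  assumes sp: "planar_geometric_storyplan G_verts G_edges l I p"
    and window: "(\<Inter>v\<in>cycle_verts. I v) = {L..R}"
  shows "6 \<le> card {x \<in> {1..4::nat} \<times> {1..2::nat}. I (Qv (fst x) (snd x)) \<subseteq> {L..R}}"
proof -
  let ?P = "{1..4::nat} \<times> {1..2::nat}" and ?J = "\<lambda>x. I (Qv (fst x) (snd x))"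
  have "card ?P \<le> card {x \<in> ?P. ?J x \<subseteq> {L..R}} + 2"
  proof (rule card_intervals_within_window)
    fix x assume "x \<in> ?P"
    then have x: "fst x \<in> {1..4}" "snd x \<in> {1..2}"
      by auto
    show "\<exists>a b. ?J x = {a..b}"
      using storyplan_interval(1)[OF sp, of "Qv (fst x) (snd x)"] x by (simp add: G_verts_iff)
    show "?J x \<inter> {L..R} \<noteq> {}"
      using apex_meets_cycle_verts_window[OF sp x] by (simp add: window)
  next
    show "x = y" if "x \<in> ?P" "y \<in> ?P" "\<tau> \<in> {L..R}" "\<tau> \<in> ?J x" "\<tau> \<in> ?J y" for x y \<tau>
      using apex_unique_in_cycle_verts_window[OF sp, of x y \<tau>] that unfolding window by blast
  qed simp
  then show ?thesis
    by simp
qed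

lemma apices_within_window_distinct_times:
  assumes sp: "planar_geometric_storyplan G_verts G_edges l I p"
    and window: "(\<Inter>v\<in>cycle_verts. I v) = {L..R}"
  shows "\<exists>T ap. bij_betw ap T {x \<in> {1..4} \<times> {1..2}. I (Qv (fst x) (snd x)) \<subseteq> {L..R}} \<and>
    (\<forall>\<tau>\<in>T. \<tau> \<in> I (Qv (fst (ap \<tau>)) (snd (ap \<tau>))) \<inter> I (Rv (fst (ap \<tau>)) (snd (ap \<tau>))))"
proof (rule distinct_witnesses)
  fix x assume "x \<in> {x \<in> {1..4} \<times> {1..2}. I (Qv (fst x) (snd x)) \<subseteq> {L..R}}"
  then have "fst x \<in> {1..4}" "snd x \<in> {1..2}"
    by auto
  then show "I (Qv (fst x) (snd x)) \<inter> I (Rv (fst x) (snd x)) \<noteq> {}"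
    using storyplan_edge_meet[OF sp G_edges_apex(4)] by (metis Int_commute)
next
  fix x y \<tau>
  assume "x \<in> {x \<in> {1..4} \<times> {1..2}. I (Qv (fst x) (snd x)) \<subseteq> {L..R}}"
    and "y \<in> {x \<in> {1..4} \<times> {1..2}. I (Qv (fst x) (snd x)) \<subseteq> {L..R}}"
    and "\<tau> \<in> I (Qv (fst x) (snd x))" "\<tau> \<in> I (Qv (fst y) (snd y))"
  then show "x = y"
    using apex_unique_in_cycle_verts_window[OF sp, of x y \<tau>] unfolding window by blast
qed

theorem corollary4:
  fixes l :: nat and I :: "gv \<Rightarrow> nat set" and p :: "gv \<Rightarrow> real^2"
  assumes "planar_geometric_storyplan G_verts G_edges l I p"
  shows "\<exists>T :: nat set. \<exists>ap :: nat \<Rightarrow> nat \<times> nat.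
           T \<subseteq> {1..l} \<and> finite T \<and> card T \<ge> 6 \<and> inj_on ap T \<and>
           (\<forall>t\<in>T. ap t \<in> {1..4} \<times> {1..2} \<and>
              Qv (fst (ap t)) (snd (ap t)) \<in> frame_verts G_verts I t \<and>
              Rv (fst (ap t)) (snd (ap t)) \<in> frame_verts G_verts I t \<and>
              cycle_verts \<subseteq> frame_verts G_verts I t)"
proof -
  obtain L R where window: "(\<Inter>v\<in>cycle_verts. I v) = {L..R}"
    by (rule cycle_verts_window[OF assms])
  define Good where "Good = {x \<in> {1..4::nat} \<times> {1..2::nat}. I (Qv (fst x) (snd x)) \<subseteq> {L..R}}"
  obtain T ap where bij: "bij_betw ap T Good"
    and witness: "\<forall>\<tau>\<in>T. \<tau> \<in> I (Qv (fst (ap \<tau>)) (snd (ap \<tau>))) \<inter> I (Rv (fst (ap \<tau>)) (snd (ap \<tau>)))"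
    using apices_within_window_distinct_times[OF assms window, folded Good_def] by blast
  have good: "ap \<tau> \<in> {1..4} \<times> {1..2}" "\<tau> \<in> (\<Inter>v\<in>cycle_verts. I v)" if "\<tau> \<in> T" for \<tau>
  proof -
    have "ap \<tau> \<in> Good"
      using bij_betwE[OF bij] that by blast
    then show "ap \<tau> \<in> {1..4} \<times> {1..2}" "\<tau> \<in> (\<Inter>v\<in>cycle_verts. I v)"
      using witness that unfolding Good_def window by auto
  qed
  show ?thesis
  proof (intro exI conjI ballI)
    show "finite T" "6 \<le> card T" "inj_on ap T"
      using card_apices_within_cycle_verts_window[OF assms window, folded Good_def]
        bij_betw_finite[OF bij] bij_betw_same_card[OF bij] bij_betw_imp_inj_on[OF bij]
      by (simp_all add: Good_def)
    show "T \<subseteq> {1..l}"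
      using good(1) bspec[OF witness] storyplan_interval(3)[OF assms]
      by (force simp: G_verts_iff mem_Times_iff)
    fix \<tau> assume "\<tau> \<in> T"
    note good = good[OF this] and witness = bspec[OF witness this]
    show "ap \<tau> \<in> {1..4} \<times> {1..2}" "cycle_verts \<subseteq> frame_verts G_verts I \<tau>"
      "Qv (fst (ap \<tau>)) (snd (ap \<tau>)) \<in> frame_verts G_verts I \<tau>"
      "Rv (fst (ap \<tau>)) (snd (ap \<tau>)) \<in> frame_verts G_verts I \<tau>"
      using good witness cycle_verts_subset_G_verts by (auto simp: frame_verts_def G_verts_iff)
  qed
qed

end
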